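(* Let $X\subset\mathbb{R}^2$ be a twice continuously differentiable simple closed planar curve, regarded as the mm-space $\mathcal{X}$, and let $\mathbb{S}^1$ be the unit circle regarded likewise. If $H_{\mathcal{X}}(r)=H_{\mathbb{S}^1}(r)$ for all $r\geq0$, then $X$ is isometric to $\mathbb{S}^1$, i.e. $X$ is a circle of radius $1$.
   Context: A plane curve $X$ is regarded as an mm-space $\mathcal{X}=(X,d_X,\mu_X)$ with $d_X$ the restriction of the Euclidean distance of $\mathbb{R}^2$ and $\mu_X$ arclength measure normalized to total mass one. The global distance distribution is $H_{\mathcal{X}}(r)=\mu_X\otimes\mu_X(\{(x,x')\in X\times X: d_X(x,x')\le r\})$, $r\geq0$. *)

theory Defs
  imports "HOL-Probability.Probability"
begin

definition C2_function :: "(real \<Rightarrow> complex) \<Rightarrow> bool" where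
  "C2_function \<gamma> \<longleftrightarrow>
     (\<exists>\<gamma>' \<gamma>''. (\<forall>t. (\<gamma> has_vector_derivative \<gamma>' t) (at t)) \<and>
               (\<forall>t. (\<gamma>' has_vector_derivative \<gamma>'' t) (at t)) \<and>
               continuous_on UNIV \<gamma>'')"

definition C2_simple_closed_curve :: "(real \<Rightarrow> complex) \<Rightarrow> real \<Rightarrow> bool" where
  "C2_simple_closed_curve \<gamma> L \<longleftrightarrow>
     L > 0 \<and> C2_function \<gamma> \<and>
     (\<forall>t. \<gamma> (t + L) = \<gamma> t) \<and>
     inj_on \<gamma> {0..<L} \<and>
     (\<forall>t. vector_derivative \<gamma> (at t) \<noteq> 0)"

definition curve_length :: "(real \<Rightarrow> complex) \<Rightarrow> real \<Rightarrow> real" where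
  "curve_length \<gamma> L = (LINT t:{0..L}|lborel. norm (vector_derivative \<gamma> (at t)))"

text \<open>Arclength measure on the curve, normalized to total mass one
  (push-forward along gamma of |gamma'(t)| dt / length on one period).\<close>
definition curve_measure :: "(real \<Rightarrow> complex) \<Rightarrow> real \<Rightarrow> complex measure" where
  "curve_measure \<gamma> L =
     distr (density lborel (\<lambda>t. ennreal (norm (vector_derivative \<gamma> (at t)) / curve_length \<gamma> L)
                                  * indicator {0..<L} t))
           borel \<gamma>"

definition dist_distribution :: "(real \<Rightarrow> complex) \<Rightarrow> real \<Rightarrow> real \<Rightarrow> real" where
  "dist_distribution \<gamma> L r =
     measure (curve_measure \<gamma> L \<Otimes>\<^sub>M curve_measure \<gamma> L) {(x, x'). dist x x' \<le> r}"

end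

theory Submission
  imports Defs
begin

text \<open>Expand the squared distance of two independent points of the curve around the centroid c.
  With r(x) = |x - c|^2, I = E r and A, B, C the second central moments of Re and Im,
  the distance distribution has E d^2 = 2 I and E d^4 = 2 E r^2 + 2 I^2 + 4 (A^2 + 2 C^2 + B^2).
  As A + B = I, this gives E d^4 \<ge> 2 E r^2 + 4 I^2 \<ge> 6 I^2, with equality only if r is almost
  surely constant. The unit circle has E d^2 = 2 and E d^4 = 6, so almost every point of X, hence
  by continuity every point, lies on the unit circle about c. Finally a simple closed curve
  inside a circle is the whole circle: if it missed a point, the angle measured from that point
  would be a continuous injective real function on the loop.\<close>

section \<open>Moments of the distance between two random points\<close>

lemma integrable_continuous_AE_compact:
  fixes f :: "'a::topological_space \<Rightarrow> real"
  assumes "finite_measure N" and "f \<in> borel_measurable N" and "continuous_on UNIV f"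
    and "compact K" and "AE x in N. x \<in> K"
  shows "integrable N f"
proof -
  have "compact (f ` K)"
    using assms(3,4) by (meson compact_continuous_image continuous_on_subset subset_UNIV)
  then obtain B where "\<forall>y\<in>f ` K. norm y \<le> B"
    using compact_imp_bounded bounded_iff by metis
  with assms(5) have "AE x in N. norm (f x) \<le> B"
    by (auto elim!: eventually_mono)
  with assms(1,2) show ?thesis
    by (intro finite_measure.integrable_const_bound)
qed

locale compactly_supported_prob = prob_space M for M :: "complex measure" +
  fixes K :: "complex set"
  assumes sets_eq_borel: "sets M = sets borel"
    and compact_support: "compact K"
    and AE_in_support: "AE x in M. x \<in> K"
begin

lemma borel_measurable_continuous: "continuous_on UNIV (f::complex \<Rightarrow> real) \<Longrightarrow> f \<in> borel_measurable M"
  using borel_measurable_continuous_onI measurable_cong_sets sets_eq_borel by blast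

lemma integrable_continuous: "continuous_on UNIV (f::complex \<Rightarrow> real) \<Longrightarrow> integrable M f"
  using borel_measurable_continuous compact_support AE_in_support
  by (intro integrable_continuous_AE_compact) unfold_locales

sublocale pair: pair_prob_space M M ..

abbreviation "M2 \<equiv> M \<Otimes>\<^sub>M M"

lemma sets_pair_eq_borel: "sets M2 = sets (borel :: (complex \<times> complex) measure)"
  by (metis borel_prod sets_eq_borel sets_pair_measure_cong)

lemma AE_pair_in_support: "AE z in M2. z \<in> K \<times> K"
proof -
  have space_M: "space M = UNIV"
    using sets_eq_imp_space_eq[OF sets_eq_borel] by simp
  have "K \<times> K \<in> sets M2"
    unfolding sets_pair_eq_borel using compact_support
    by (intro borel_closed closed_Times compact_imp_closed)
  then have "{z \<in> space M2. fst z \<in> K \<and> snd z \<in> K} \<in> sets M2"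
    by (simp add: space_pair_measure space_M mem_Times_iff[symmetric])
  then have "(AE x in M. AE y in M. x \<in> K \<and> y \<in> K) \<longleftrightarrow> (AE z in M2. fst z \<in> K \<and> snd z \<in> K)"
    by (rule pair.AE_pair_iff)
  moreover have "AE x in M. AE y in M. x \<in> K \<and> y \<in> K"
    using AE_in_support by (auto elim!: eventually_mono)
  ultimately show ?thesis by (simp add: mem_Times_iff)
qed

lemma integrable_pair_continuous:
  "continuous_on UNIV (F::complex \<times> complex \<Rightarrow> real) \<Longrightarrow> integrable M2 F"
  using borel_measurable_continuous_onI measurable_cong_sets[OF sets_pair_eq_borel]
    compact_Times[OF compact_support compact_support] AE_pair_in_support
  by (intro integrable_continuous_AE_compact) (unfold_locales, blast+)

lemma
  assumes f: "continuous_on UNIV (f::complex \<Rightarrow> real)" and g: "continuous_on UNIV (g::complex \<Rightarrow> real)"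
  shows integrable_pair_product: "integrable M2 (\<lambda>z. f (fst z) * g (snd z))"
    and integral_pair_product: "integral\<^sup>L M2 (\<lambda>z. f (fst z) * g (snd z)) = integral\<^sup>L M f * integral\<^sup>L M g"
proof -
  show int: "integrable M2 (\<lambda>z. f (fst z) * g (snd z))"
    by (intro integrable_pair_continuous continuous_intros
          continuous_on_compose2[OF f] continuous_on_compose2[OF g]) auto
  have "integral\<^sup>L M2 (\<lambda>z. f (fst z) * g (snd z)) = (\<integral>x. (\<integral>y. f x * g y \<partial>M) \<partial>M)"
    using pair.integral_fst'[OF int] by simp
  then show "integral\<^sup>L M2 (\<lambda>z. f (fst z) * g (snd z)) = integral\<^sup>L M f * integral\<^sup>L M g"
    by simp
qed

lemma integral_pair_sum_list_products:
  assumes "\<forall>(c, f, g)\<in>set ts. continuous_on UNIV (f::complex \<Rightarrow> real) \<and> continuous_on UNIV (g::complex \<Rightarrow> real)"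
  shows "integrable M2 (\<lambda>z. \<Sum>(c, f, g)\<leftarrow>ts. c * (f (fst z) * g (snd z)))
    \<and> integral\<^sup>L M2 (\<lambda>z. \<Sum>(c, f, g)\<leftarrow>ts. c * (f (fst z) * g (snd z)))
      = (\<Sum>(c, f, g)\<leftarrow>ts. c * (integral\<^sup>L M f * integral\<^sup>L M g))"
  using assms
proof (induction ts)
  case (Cons t ts)
  obtain c f g where t: "t = (c, f, g)" by (cases t)
  with Cons.prems have f: "continuous_on UNIV f" and g: "continuous_on UNIV g" by auto
  show ?case
    using Cons integrable_pair_product[OF f g] integral_pair_product[OF f g]
    by (simp add: t)
qed simp

definition centroid :: complex where
  "centroid = Complex (\<integral>x. Re x \<partial>M) (\<integral>x. Im x \<partial>M)"

definition dev_re :: "complex \<Rightarrow> real" where "dev_re x = Re (x - centroid)"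
definition dev_im :: "complex \<Rightarrow> real" where "dev_im x = Im (x - centroid)"

definition sq_dist_centroid :: "complex \<Rightarrow> real" where
  "sq_dist_centroid x = (dist x centroid)\<^sup>2"

definition inertia :: real where "inertia = integral\<^sup>L M sq_dist_centroid"
definition var_re :: real where "var_re = (\<integral>x. (dev_re x)\<^sup>2 \<partial>M)"
definition var_im :: real where "var_im = (\<integral>x. (dev_im x)\<^sup>2 \<partial>M)"
definition cov_re_im :: real where "cov_re_im = (\<integral>x. dev_re x * dev_im x \<partial>M)"
definition central_moment4 :: real where "central_moment4 = (\<integral>x. (sq_dist_centroid x)\<^sup>2 \<partial>M)"

lemma continuous_on_centred [continuous_intros]:
  "continuous_on UNIV dev_re" "continuous_on UNIV dev_im" "continuous_on UNIV sq_dist_centroid"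
  unfolding dev_re_def dev_im_def sq_dist_centroid_def by (intro continuous_intros)+

lemma integral_dev_eq_0: "integral\<^sup>L M dev_re = 0" "integral\<^sup>L M dev_im = 0"
proof -
  have "integral\<^sup>L M dev_re = (\<integral>x. Re x \<partial>M) - (\<integral>x. Re centroid \<partial>M)"
    unfolding dev_re_def minus_complex.sel
    by (rule Bochner_Integration.integral_diff) (auto intro!: integrable_continuous continuous_intros)
  then show "integral\<^sup>L M dev_re = 0" by (simp add: centroid_def prob_space)
  have "integral\<^sup>L M dev_im = (\<integral>x. Im x \<partial>M) - (\<integral>x. Im centroid \<partial>M)"
    unfolding dev_im_def minus_complex.sel
    by (rule Bochner_Integration.integral_diff) (auto intro!: integrable_continuous continuous_intros)
  then show "integral\<^sup>L M dev_im = 0" by (simp add: centroid_def prob_space)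
qed

lemma sq_dist_centroid_eq_dev: "sq_dist_centroid x = (dev_re x)\<^sup>2 + (dev_im x)\<^sup>2"
  by (simp add: sq_dist_centroid_def dev_re_def dev_im_def dist_norm cmod_power2)

lemma inertia_eq: "inertia = var_re + var_im"
  unfolding inertia_def var_re_def var_im_def sq_dist_centroid_eq_dev
  by (rule Bochner_Integration.integral_add) (auto intro!: integrable_continuous continuous_intros)

lemma dist_sq_eq_dev:
  "(dist x y)\<^sup>2 = sq_dist_centroid x + sq_dist_centroid y
     - 2 * (dev_re x * dev_re y) - 2 * (dev_im x * dev_im y)"
proof -
  have "(dist x y)\<^sup>2 = (dev_re x - dev_re y)\<^sup>2 + (dev_im x - dev_im y)\<^sup>2"
    by (simp add: dist_norm cmod_power2 dev_re_def dev_im_def)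
  then show ?thesis unfolding sq_dist_centroid_eq_dev by (simp add: power2_eq_square algebra_simps)
qed

lemma integral_pair_dist_sq: "(\<integral>z. (dist (fst z) (snd z))\<^sup>2 \<partial>M2) = 2 * inertia"
proof -
  let ?ts = "[(1::real, sq_dist_centroid, \<lambda>_. 1::real), (1, \<lambda>_. 1, sq_dist_centroid),
              (-2, dev_re, dev_re), (-2, dev_im, dev_im)]"
  have cont: "\<forall>(c, f, g)\<in>set ?ts. continuous_on UNIV f \<and> continuous_on UNIV g"
    by (auto intro!: continuous_intros)
  have "(\<lambda>z. (dist (fst z) (snd z))\<^sup>2) = (\<lambda>z. \<Sum>(c, f, g)\<leftarrow>?ts. c * (f (fst z) * g (snd z)))"
    by (auto simp: dist_sq_eq_dev)
  then show ?thesis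
    using integral_pair_sum_list_products[OF cont] by (simp add: integral_dev_eq_0 inertia_def prob_space)
qed

lemma integral_pair_dist_pow4:
  "(\<integral>z. (dist (fst z) (snd z)) ^ 4 \<partial>M2)
     = 2 * central_moment4 + 2 * inertia\<^sup>2 + 4 * var_re\<^sup>2 + 8 * cov_re_im\<^sup>2 + 4 * var_im\<^sup>2"
proof -
  let ?r = sq_dist_centroid
  let ?ts = "[(1::real, \<lambda>x. (?r x)\<^sup>2, \<lambda>_. 1::real), (1, \<lambda>_. 1, \<lambda>x. (?r x)\<^sup>2), (2, ?r, ?r),
     (-4, \<lambda>x. ?r x * dev_re x, dev_re), (-4, \<lambda>x. ?r x * dev_im x, dev_im),
     (-4, dev_re, \<lambda>x. ?r x * dev_re x), (-4, dev_im, \<lambda>x. ?r x * dev_im x),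
     (4, \<lambda>x. (dev_re x)\<^sup>2, \<lambda>x. (dev_re x)\<^sup>2), (8, \<lambda>x. dev_re x * dev_im x, \<lambda>x. dev_re x * dev_im x),
     (4, \<lambda>x. (dev_im x)\<^sup>2, \<lambda>x. (dev_im x)\<^sup>2)]"
  have cont: "\<forall>(c, f, g)\<in>set ?ts. continuous_on UNIV f \<and> continuous_on UNIV g"
    by (auto intro!: continuous_intros)
  have "(dist x y) ^ 4 = ((dist x y)\<^sup>2)\<^sup>2" for x y :: complex
    by simp
  then have "(\<lambda>z. (dist (fst z) (snd z)) ^ 4) = (\<lambda>z. \<Sum>(c, f, g)\<leftarrow>?ts. c * (f (fst z) * g (snd z)))"
    unfolding dist_sq_eq_dev by (auto simp: power2_eq_square algebra_simps)
  then show ?thesis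
    using integral_pair_sum_list_products[OF cont]
    by (simp add: integral_dev_eq_0 inertia_def var_re_def var_im_def cov_re_im_def
        central_moment4_def power2_eq_square prob_space)
qed

lemma integral_pair_dist_pow4_ge: "2 * central_moment4 + 4 * inertia\<^sup>2 \<le> (\<integral>z. (dist (fst z) (snd z)) ^ 4 \<partial>M2)"
proof -
  have "var_re\<^sup>2 + var_im\<^sup>2 = inertia\<^sup>2 / 2 + (var_re - var_im)\<^sup>2 / 2"
    by (simp add: inertia_eq power2_eq_square field_simps)
  moreover have "(var_re - var_im)\<^sup>2 \<ge> 0" "cov_re_im\<^sup>2 \<ge> 0"
    by simp_all
  ultimately show ?thesis
    unfolding integral_pair_dist_pow4 by linarith
qed

lemma AE_dist_centroid_eq_sqrt_inertia:
  assumes "central_moment4 \<le> inertia\<^sup>2"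
  shows "AE x in M. dist x centroid = sqrt inertia"
proof -
  define f where "f x = (sq_dist_centroid x - inertia)\<^sup>2" for x
  have f_cont: "continuous_on UNIV f"
    unfolding f_def by (intro continuous_intros)
  have "integral\<^sup>L M f = central_moment4 - 2 * inertia * inertia + inertia\<^sup>2"
    unfolding f_def power2_diff central_moment4_def inertia_def
    by (subst Bochner_Integration.integral_add Bochner_Integration.integral_diff,
        (auto intro!: integrable_continuous continuous_intros)[2])+ (simp add: prob_space)
  with assms have "integral\<^sup>L M f \<le> 0"
    by (simp add: power2_eq_square)
  moreover have "integral\<^sup>L M f \<ge> 0"
    by (simp add: f_def)
  ultimately have "integral\<^sup>L M f = 0"
    by simp
  then have "AE x in M. f x = 0"
    by (subst (asm) integral_nonneg_eq_0_iff_AE) (auto simp: f_def intro!: integrable_continuous[OF f_cont])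
  then show ?thesis
    by eventually_elim (simp add: f_def sq_dist_centroid_def real_sqrt_unique)
qed

end

section \<open>The distance law\<close>

definition dist_law :: "'a::metric_space measure \<Rightarrow> real measure" where
  "dist_law M = distr (M \<Otimes>\<^sub>M M) borel (\<lambda>z. dist (fst z) (snd z))"

lemma measurable_dist_pair:
  fixes M :: "'a::{metric_space, second_countable_topology} measure"
  assumes "sets M = sets borel"
  shows "(\<lambda>z. dist (fst z) (snd z)) \<in> borel_measurable (M \<Otimes>\<^sub>M M)"
proof -
  have "sets (M \<Otimes>\<^sub>M M) = sets (borel :: ('a \<times> 'a) measure)"
    by (metis assms borel_prod sets_pair_measure_cong)
  moreover have "(\<lambda>z::'a \<times> 'a. dist (fst z) (snd z)) \<in> borel_measurable borel"
    by (intro borel_measurable_continuous_onI continuous_intros)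
  ultimately show ?thesis
    using measurable_cong_sets by blast
qed

lemma
  fixes M :: "'a::{metric_space, second_countable_topology} measure"
  assumes M: "prob_space M" and sets_M: "sets M = sets borel"
  shows real_distribution_dist_law: "real_distribution (dist_law M)"
    and cdf_dist_law: "cdf (dist_law M) r = measure (M \<Otimes>\<^sub>M M) {(x, x'). dist x x' \<le> r}"
proof -
  interpret pair_prob_space M M
    using M by (simp add: pair_prob_space_def pair_sigma_finite_def prob_space_imp_sigma_finite)
  note meas = measurable_dist_pair[OF sets_M]
  show "real_distribution (dist_law M)"
    unfolding dist_law_def real_distribution_def real_distribution_axioms_def
    using prob_space_distr[OF meas] by simp
  have "space (M \<Otimes>\<^sub>M M) = UNIV"
    by (simp add: space_pair_measure sets_eq_imp_space_eq[OF sets_M])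
  then have "(\<lambda>z. dist (fst z) (snd z)) -` {..r} \<inter> space (M \<Otimes>\<^sub>M M) = {(x, x'). dist x x' \<le> r}"
    by auto
  then show "cdf (dist_law M) r = measure (M \<Otimes>\<^sub>M M) {(x, x'). dist x x' \<le> r}"
    unfolding cdf_def dist_law_def by (simp add: measure_distr[OF meas])
qed

lemma dist_law_eqI:
  fixes M1 M2 :: "'a::{metric_space, second_countable_topology} measure"
  assumes "prob_space M1" "sets M1 = sets borel" "prob_space M2" "sets M2 = sets borel"
    and "\<forall>r\<ge>0. measure (M1 \<Otimes>\<^sub>M M1) {(x, x'). dist x x' \<le> r}
               = measure (M2 \<Otimes>\<^sub>M M2) {(x, x'). dist x x' \<le> r}"
  shows "dist_law M1 = dist_law M2"
proof (rule cdf_unique)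
  show "real_distribution (dist_law M1)" "real_distribution (dist_law M2)"
    using assms by (simp_all add: real_distribution_dist_law)
  show "cdf (dist_law M1) = cdf (dist_law M2)"
  proof
    fix r :: real
    show "cdf (dist_law M1) r = cdf (dist_law M2) r"
    proof (cases "r \<ge> 0")
      case False
      then have "{(x::'a, x'). dist x x' \<le> r} = {}"
        by (auto dest: order_trans[OF zero_le_dist])
      then show ?thesis using assms by (simp add: cdf_dist_law)
    qed (use assms in \<open>simp add: cdf_dist_law\<close>)
  qed
qed

lemma integral_dist_law:
  fixes M :: "'a::{metric_space, second_countable_topology} measure" and f :: "real \<Rightarrow> real"
  assumes "sets M = sets borel" and "f \<in> borel_measurable borel"
  shows "integral\<^sup>L (dist_law M) f = (\<integral>z. f (dist (fst z) (snd z)) \<partial>(M \<Otimes>\<^sub>M M))"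
  unfolding dist_law_def using integral_distr[OF measurable_dist_pair[OF assms(1)] assms(2)] by simp

section \<open>Arclength measure of a regular curve\<close>

locale regular_curve =
  fixes \<gamma> \<gamma>' :: "real \<Rightarrow> complex" and L :: real
  assumes L_pos: "L > 0"
    and has_derivative: "\<And>t. (\<gamma> has_vector_derivative \<gamma>' t) (at t)"
    and continuous_derivative: "continuous_on UNIV \<gamma>'"
    and derivative_nonzero: "\<And>t. \<gamma>' t \<noteq> 0"
begin

lemma continuous: "continuous_on UNIV \<gamma>"
  using has_derivative by (meson continuous_at_imp_continuous_on has_vector_derivative_continuous)

definition speed :: "real \<Rightarrow> real" where "speed t = norm (\<gamma>' t)"

definition arc_density :: "real \<Rightarrow> real" where
  "arc_density t = speed t / curve_length \<gamma> L * indicator {0..<L} t"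

lemma continuous_speed: "continuous_on UNIV speed"
  unfolding speed_def by (intro continuous_intros continuous_derivative)

lemma borel_measurable_curve [measurable]: "\<gamma> \<in> borel_measurable borel"
  using continuous by (rule borel_measurable_continuous_onI)

lemma borel_measurable_speed [measurable]: "speed \<in> borel_measurable borel"
  using continuous_speed by (rule borel_measurable_continuous_onI)

lemma borel_measurable_arc_density [measurable]: "arc_density \<in> borel_measurable borel"
  unfolding arc_density_def by measurable

lemma set_integrable_speed: "set_integrable lborel {0..L} speed"
  using borel_integrable_atLeastAtMost' continuous_speed continuous_on_subset by blast

lemma curve_length_eq: "curve_length \<gamma> L = (LINT t:{0..L}|lborel. speed t)"
  unfolding curve_length_def speed_def vector_derivative_at[OF has_derivative] ..

lemma curve_length_pos: "curve_length \<gamma> L > 0"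
proof -
  have "compact (speed ` {0..L})"
    using continuous_speed by (meson compact_Icc compact_continuous_image continuous_on_subset subset_UNIV)
  moreover have "speed ` {0..L} \<noteq> {}"
    using L_pos by auto
  ultimately obtain c where c: "c \<in> speed ` {0..L}" "\<forall>y \<in> speed ` {0..L}. c \<le> y"
    using compact_attains_inf by blast
  have "c > 0"
    using c(1) derivative_nonzero by (auto simp: speed_def)
  have "L * c = (LINT t:{0..L}|lborel. c)"
    using L_pos by (subst set_integral_const) auto
  also have "\<dots> \<le> (LINT t:{0..L}|lborel. speed t)"
    using borel_integrable_atLeastAtMost'[of 0 L "\<lambda>_. c"] set_integrable_speed c(2)
    by (intro set_integral_mono) auto
  finally show ?thesis
    using \<open>c > 0\<close> L_pos curve_length_eq by (smt (verit) mult_pos_pos)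
qed

lemma arc_density_nonneg: "arc_density t \<ge> 0"
  using curve_length_pos by (auto simp: arc_density_def speed_def split: split_indicator)

lemma arc_density_pos: "t \<in> {0..<L} \<Longrightarrow> arc_density t > 0"
  using curve_length_pos derivative_nonzero by (auto simp: arc_density_def speed_def)

lemma curve_measure_eq: "curve_measure \<gamma> L = distr (density lborel arc_density) borel \<gamma>"
  unfolding curve_measure_def
  by (intro arg_cong2[where f="\<lambda>a b. distr a borel b"] refl arg_cong2[where f=density] ext)
     (auto simp: arc_density_def speed_def vector_derivative_at[OF has_derivative] split: split_indicator)

lemma AE_arc_density_eq: "AE t in lborel. arc_density t = indicator {0..L} t * speed t / curve_length \<gamma> L"
  using AE_lborel_singleton[of L] by eventually_elim (auto simp: arc_density_def split: split_indicator)

lemma integral_arc_density: "integral\<^sup>L lborel arc_density = 1"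
proof -
  have "integral\<^sup>L lborel arc_density = integral\<^sup>L lborel (\<lambda>t. indicator {0..L} t * speed t / curve_length \<gamma> L)"
    by (rule integral_cong_AE[OF _ _ AE_arc_density_eq]) measurable
  also have "\<dots> = 1"
    using curve_length_pos by (simp add: curve_length_eq set_lebesgue_integral_def)
  finally show ?thesis .
qed

lemma integrable_arc_density: "integrable lborel arc_density"
proof (rule Bochner_Integration.integrable_bound)
  show "integrable lborel (\<lambda>t. indicator {0..L} t * speed t / curve_length \<gamma> L)"
    using set_integrable_speed by (simp add: set_integrable_def)
  show "AE t in lborel. norm (arc_density t) \<le> norm (indicator {0..L} t * speed t / curve_length \<gamma> L)"
    using AE_arc_density_eq by eventually_elim simp
qed simp

lemma prob_space_curve_measure: "prob_space (curve_measure \<gamma> L)"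
proof
  have "emeasure (curve_measure \<gamma> L) (space (curve_measure \<gamma> L)) = (\<integral>\<^sup>+ t. ennreal (arc_density t) \<partial>lborel)"
    by (simp add: curve_measure_eq emeasure_distr emeasure_density)
  also have "\<dots> = 1"
    using integral_arc_density by (simp add: nn_integral_eq_integral[OF integrable_arc_density] arc_density_nonneg)
  finally show "emeasure (curve_measure \<gamma> L) (space (curve_measure \<gamma> L)) = 1" .
qed

lemma sets_curve_measure: "sets (curve_measure \<gamma> L) = sets borel"
  by (simp add: curve_measure_eq)

lemma AE_curve_measure_iff:
  assumes "{x. P x} \<in> sets borel"
  shows "(AE x in curve_measure \<gamma> L. P x) \<longleftrightarrow> (AE t in lborel. 0 < arc_density t \<longrightarrow> P (\<gamma> t))"
  unfolding curve_measure_eq using assms by (subst AE_distr_iff) (auto simp: AE_density)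

lemma compact_image: "compact (\<gamma> ` {0..L})"
  using continuous by (meson compact_Icc compact_continuous_image continuous_on_subset subset_UNIV)

sublocale curve: compactly_supported_prob "curve_measure \<gamma> L" "\<gamma> ` {0..L}"
proof (intro compactly_supported_prob.intro compactly_supported_prob_axioms.intro
    prob_space_curve_measure sets_curve_measure compact_image)
  have "{x. x \<in> \<gamma> ` {0..L}} \<in> sets borel"
    using compact_image by (simp add: borel_closed compact_imp_closed)
  then show "AE x in curve_measure \<gamma> L. x \<in> \<gamma> ` {0..L}"
    by (subst AE_curve_measure_iff) (auto simp: arc_density_def split: split_indicator)
qed

lemma integral_curve_measure:
  assumes "continuous_on UNIV (h :: complex \<Rightarrow> real)"
  shows "integral\<^sup>L (curve_measure \<gamma> L) h = (LINT t:{0..L}|lborel. speed t * h (\<gamma> t)) / curve_length \<gamma> L"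
proof -
  have [measurable]: "h \<in> borel_measurable borel"
    using assms by (rule borel_measurable_continuous_onI)
  have "integral\<^sup>L (curve_measure \<gamma> L) h = (\<integral>t. arc_density t * h (\<gamma> t) \<partial>lborel)"
    unfolding curve_measure_eq
    by (simp add: integral_distr Bochner_Integration.integral_density arc_density_nonneg)
  also have "\<dots> = (\<integral>t. indicator {0..L} t * speed t / curve_length \<gamma> L * h (\<gamma> t) \<partial>lborel)"
    using AE_arc_density_eq by (intro integral_cong_AE) (measurable, auto elim!: eventually_mono)
  finally show ?thesis
    by (simp add: set_lebesgue_integral_def mult.assoc)
qed

lemma image_subset_if_AE:
  assumes "closed T" and "AE x in curve_measure \<gamma> L. x \<in> T"
  shows "\<gamma> ` {0..L} \<subseteq> T"
proof -
  have "AE t in lborel. 0 < arc_density t \<longrightarrow> \<gamma> t \<in> T"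
    using assms by (simp add: AE_curve_measure_iff borel_closed)
  then have "AE t \<in> {0<..<L} in lebesgue. t \<in> \<gamma> -` T"
    by (intro AE_completion) (auto intro: arc_density_pos elim!: eventually_mono)
  moreover have "closed (\<gamma> -` T)"
    using assms(1) continuous by (simp add: continuous_closed_vimage continuous_on_eq_continuous_at)
  ultimately have "\<gamma> ` {0<..<L} \<subseteq> T"
    using mem_closed_if_AE_lebesgue_open[of "{0<..<L}" "\<gamma> -` T"] by auto
  then have "\<gamma> ` closure {0<..<L} \<subseteq> T"
    using assms(1) continuous by (intro image_closure_subset) (auto intro: continuous_on_subset)
  then show ?thesis
    using L_pos by simp
qed

end

section \<open>The unit circle\<close>

interpretation circle: regular_curve cis "\<lambda>t. \<i> * cis t" "2 * pi"
proof
  show "(cis has_vector_derivative \<i> * cis t) (at t)" for t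
    using has_derivative_cis[OF has_derivative_ident[of "at t"]] by (simp add: has_vector_derivative_def)
qed (auto intro!: continuous_intros)

lemma circle_speed: "circle.speed t = 1"
  by (simp add: circle.speed_def norm_mult)

lemma curve_length_circle: "curve_length cis (2 * pi) = 2 * pi"
  unfolding circle.curve_length_eq circle_speed by (subst set_integral_const) auto

lemma integral_circle_measure:
  "continuous_on UNIV h \<Longrightarrow>
    integral\<^sup>L (curve_measure cis (2 * pi)) h = (LINT t:{0..2 * pi}|lborel. h (cis t)) / (2 * pi)"
  using circle.integral_curve_measure by (simp add: circle_speed curve_length_circle)

lemma set_integral_FTC_0_2pi:
  assumes "\<And>x. (F has_real_derivative f x) (at x)" and "continuous_on UNIV f"
  shows "(LINT x:{0..2 * pi}|lborel. f x) = F (2 * pi) - F 0"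
  unfolding set_lebesgue_integral_def
proof (rule integral_FTC_atLeastAtMost)
  show "(F has_vector_derivative f x) (at x within {0..2 * pi})" for x
    using assms(1)[of x] by (simp add: has_real_derivative_iff_has_vector_derivative[symmetric] has_field_derivative_at_within)
  show "continuous_on {0..2 * pi} f"
    using assms(2) continuous_on_subset by blast
qed simp

lemma circle_centroid: "circle.curve.centroid = 0"
proof -
  have "(LINT t:{0..2 * pi}|lborel. cos t) = sin (2 * pi) - sin 0"
    by (rule set_integral_FTC_0_2pi) (auto intro!: derivative_eq_intros continuous_intros)
  moreover have "(LINT t:{0..2 * pi}|lborel. sin t) = - cos (2 * pi) - - cos 0"
    by (rule set_integral_FTC_0_2pi) (auto intro!: derivative_eq_intros continuous_intros)
  ultimately show ?thesis
    unfolding circle.curve.centroid_def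
    by (simp add: integral_circle_measure continuous_on_Re continuous_on_Im continuous_on_id complex_eq_iff)
qed

lemma circle_var_re: "circle.curve.var_re = 1 / 2"
proof -
  have "((\<lambda>t. t / 2 + sin t * cos t / 2) has_real_derivative (cos x)\<^sup>2) (at x)" for x
  proof -
    have "((\<lambda>t. t / 2 + sin t * cos t / 2) has_real_derivative (1 / 2 + ((cos x)\<^sup>2 - (sin x)\<^sup>2) / 2)) (at x)"
      by (auto intro!: derivative_eq_intros simp: power2_eq_square field_simps)
    then show ?thesis
      by (simp add: sin_squared_eq field_simps)
  qed
  then have "(LINT t:{0..2 * pi}|lborel. (cos t)\<^sup>2) = pi"
    by (subst set_integral_FTC_0_2pi[where F="\<lambda>t. t / 2 + sin t * cos t / 2"]) (auto intro!: continuous_intros)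
  then show ?thesis
    unfolding circle.curve.var_re_def circle.curve.dev_re_def circle_centroid
    by (subst integral_circle_measure) (auto intro!: continuous_intros)
qed

lemma circle_cov_re_im: "circle.curve.cov_re_im = 0"
proof -
  have "((\<lambda>t. (sin t)\<^sup>2 / 2) has_real_derivative cos x * sin x) (at x)" for x
    by (auto intro!: derivative_eq_intros simp: algebra_simps)
  then have "(LINT t:{0..2 * pi}|lborel. cos t * sin t) = 0"
    by (subst set_integral_FTC_0_2pi[where F="\<lambda>t. (sin t)\<^sup>2 / 2"]) (auto intro!: continuous_intros)
  then show ?thesis
    unfolding circle.curve.cov_re_im_def circle.curve.dev_re_def circle.curve.dev_im_def circle_centroid
    by (subst integral_circle_measure) (auto intro!: continuous_intros)
qed

lemma integral_circle_sq_dist_centroid: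
  assumes "continuous_on UNIV (f :: real \<Rightarrow> real)"
  shows "(\<integral>x. f (circle.curve.sq_dist_centroid x) \<partial>curve_measure cis (2 * pi)) = f 1"
proof -
  have "circle.curve.sq_dist_centroid (cis t) = 1" for t
    by (simp add: circle.curve.sq_dist_centroid_def circle_centroid)
  then have "(\<integral>x. f (circle.curve.sq_dist_centroid x) \<partial>curve_measure cis (2 * pi))
      = (LINT t:{0..2 * pi}|lborel. f 1) / (2 * pi)"
    by (subst integral_circle_measure)
       (auto intro!: continuous_on_compose2[OF assms] continuous_intros)
  then show ?thesis by (simp add: set_integral_const)
qed

lemma circle_inertia: "circle.curve.inertia = 1"
  using integral_circle_sq_dist_centroid[of "\<lambda>x. x"] by (simp add: circle.curve.inertia_def)

lemma circle_central_moment4: "circle.curve.central_moment4 = 1"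
  using integral_circle_sq_dist_centroid[of "\<lambda>x. x\<^sup>2"]
  by (simp add: circle.curve.central_moment4_def continuous_intros)

lemma circle_integral_pair_dist_sq: "(\<integral>z. (dist (fst z) (snd z))\<^sup>2 \<partial>circle.curve.M2) = 2"
  by (simp add: circle.curve.integral_pair_dist_sq circle_inertia)

lemma circle_integral_pair_dist_pow4: "(\<integral>z. (dist (fst z) (snd z)) ^ 4 \<partial>circle.curve.M2) = 6"
proof -
  have var_im: "circle.curve.var_im = 1 / 2"
    using circle.curve.inertia_eq circle_inertia circle_var_re by simp
  show ?thesis
    by (simp add: var_im circle.curve.integral_pair_dist_pow4 circle_inertia circle_var_re
        circle_cov_re_im circle_central_moment4 power2_eq_square)
qed

section \<open>Simple loops in a circle\<close>

lemma continuous_loop_not_inj: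
  fixes h :: "real \<Rightarrow> real"
  assumes cont: "continuous_on {a..b} h" and "a < b" and loop: "h a = h b"
  shows "\<not> inj_on h {a..<b}"
proof
  assume inj: "inj_on h {a..<b}"
  define m where "m = (a + b) / 2"
  have m: "a < m" "m < b"
    using \<open>a < b\<close> by (auto simp: m_def)
  then have "h a \<noteq> h m"
    using inj by (auto dest: inj_onD)
  define y where "y = midpoint (h a) (h m)"
  have y: "y \<noteq> h a" "y \<noteq> h m"
    using \<open>h a \<noteq> h m\<close> by (auto simp: y_def midpoint_def field_simps)
  have "continuous_on (closed_segment a m) h" "continuous_on (closed_segment m b) h"
    using cont m by (auto simp: closed_segment_eq_real_ivl intro: continuous_on_subset)
  moreover have "y \<in> closed_segment (h a) (h m)" "y \<in> closed_segment (h m) (h b)"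
    using loop by (simp_all add: y_def closed_segment_commute[of "h m"])
  ultimately obtain s1 s2 where s1: "s1 \<in> {a..m}" "h s1 = y" and s2: "s2 \<in> {m..b}" "h s2 = y"
    using IVT'_closed_segment_real m by (metis closed_segment_eq_real_ivl1 less_imp_le)
  have "s1 < m" "m < s2" "s2 < b"
    using s1 s2 y loop by (auto simp: order.order_iff_strict)
  then have "s1 = s2"
    using inj s1 s2 m by (auto dest: inj_onD[of h _ s1 s2])
  with \<open>s1 < m\<close> \<open>m < s2\<close> show False by simp
qed

text \<open>A point p of the circle missed by the loop is sent to -1 by a rotation-dilation w about c;
  the principal argument of w is then a continuous injective real function on the loop.\<close>

lemma simple_loop_in_sphere_onto:
  fixes \<gamma> :: "real \<Rightarrow> complex"
  assumes cont: "continuous_on {0..L} \<gamma>" and "0 < L" and loop: "\<gamma> 0 = \<gamma> L"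
    and inj: "inj_on \<gamma> {0..<L}" and in_sphere: "\<gamma> ` {0..L} \<subseteq> sphere c r"
  shows "sphere c r \<subseteq> \<gamma> ` {0..L}"
proof
  fix p assume p: "p \<in> sphere c r"
  show "p \<in> \<gamma> ` {0..L}"
  proof (rule ccontr)
    assume p_notin: "p \<notin> \<gamma> ` {0..L}"
    have "\<gamma> 0 \<in> sphere c r"
      using in_sphere \<open>0 < L\<close> by (intro subsetD[OF in_sphere] imageI) auto
    with p p_notin \<open>0 < L\<close> have "p \<noteq> c"
      by (auto simp: dist_commute)
    define w where "w t = (\<gamma> t - c) / (c - p)" for t
    have norm_w: "norm (w t) = 1" if "t \<in> {0..L}" for t
    proof -
      have "dist c (\<gamma> t) = dist c p"
        using subsetD[OF in_sphere imageI[OF that]] p by simp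
      then show ?thesis
        using \<open>p \<noteq> c\<close> by (simp add: w_def norm_divide dist_norm norm_minus_commute)
    qed
    have w_not_nonpos: "w t \<notin> \<real>\<^sub>\<le>\<^sub>0" if t: "t \<in> {0..L}" for t
    proof
      assume "w t \<in> \<real>\<^sub>\<le>\<^sub>0"
      then have "w t = - 1"
        using norm_w[OF t] by (auto simp: complex_nonpos_Reals_iff complex_eq_iff cmod_def)
      then have "\<gamma> t = p"
        using \<open>p \<noteq> c\<close> by (simp add: w_def field_simps)
      with p_notin t show False by auto
    qed
    define h where "h t = Im (Ln (w t))" for t
    have "continuous_on {0..L} h"
      unfolding h_def w_def using cont w_not_nonpos \<open>p \<noteq> c\<close>
      by (intro continuous_intros) (auto simp: w_def)
    moreover have "h 0 = h L"
      using loop by (simp add: h_def w_def)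
    moreover have "inj_on h {0..<L}"
    proof (rule inj_onI)
      fix s t assume s: "s \<in> {0..<L}" and t: "t \<in> {0..<L}" and "h s = h t"
      have "w s \<noteq> 0" "w t \<noteq> 0"
        using norm_w s t by fastforce+
      moreover have "Ln (w s) = Ln (w t)"
        using \<open>h s = h t\<close> \<open>w s \<noteq> 0\<close> \<open>w t \<noteq> 0\<close> norm_w s t by (simp add: h_def complex_eq_iff)
      ultimately have "\<gamma> s = \<gamma> t"
        using \<open>p \<noteq> c\<close> by (simp add: Ln_eq_iff w_def)
      with inj s t show "s = t"
        by (auto dest: inj_onD)
    qed
    ultimately show False
      using continuous_loop_not_inj \<open>0 < L\<close> by blast
  qed
qed

lemma C2_simple_closed_curveE:
  assumes "C2_simple_closed_curve \<gamma> L"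
  obtains \<gamma>' where "regular_curve \<gamma> \<gamma>' L" and "\<gamma> 0 = \<gamma> L" and "inj_on \<gamma> {0..<L}"
proof -
  from assms obtain \<gamma>' \<gamma>'' where "L > 0" and der: "\<And>t. (\<gamma> has_vector_derivative \<gamma>' t) (at t)"
    and der': "\<And>t. (\<gamma>' has_vector_derivative \<gamma>'' t) (at t)" and periodic: "\<forall>t. \<gamma> (t + L) = \<gamma> t"
    and "inj_on \<gamma> {0..<L}" and nonzero: "\<forall>t. vector_derivative \<gamma> (at t) \<noteq> 0"
    unfolding C2_simple_closed_curve_def C2_function_def by blast
  have "regular_curve \<gamma> \<gamma>' L"
  proof
    show "continuous_on UNIV \<gamma>'"
      using der' by (meson continuous_at_imp_continuous_on has_vector_derivative_continuous)
    show "\<gamma>' t \<noteq> 0" for t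
      using nonzero vector_derivative_at[OF der] by metis
  qed (use \<open>L > 0\<close> der in auto)
  moreover have "\<gamma> 0 = \<gamma> L"
    using periodic[rule_format, of 0] by simp
  ultimately show ?thesis
    using that \<open>inj_on \<gamma> {0..<L}\<close> by blast
qed

theorem proposition5p6:
  fixes \<gamma> :: "real \<Rightarrow> complex" and L :: real
  assumes "C2_simple_closed_curve \<gamma> L"
    and "\<forall>r\<ge>0. dist_distribution \<gamma> L r = dist_distribution cis (2 * pi) r"
  shows "\<exists>c. \<gamma> ` {0..L} = sphere c 1"
proof -
  obtain \<gamma>' where "regular_curve \<gamma> \<gamma>' L" and loop: "\<gamma> 0 = \<gamma> L" and inj: "inj_on \<gamma> {0..<L}"
    using assms(1) by (rule C2_simple_closed_curveE)
  interpret X: regular_curve \<gamma> \<gamma>' L by fact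
  have "dist_law (curve_measure \<gamma> L) = dist_law (curve_measure cis (2 * pi))"
    using assms(2) X.prob_space_curve_measure X.sets_curve_measure
      circle.prob_space_curve_measure circle.sets_curve_measure
    by (intro dist_law_eqI) (auto simp: dist_distribution_def)
  then have same_moments: "(\<integral>z. f (dist (fst z) (snd z)) \<partial>X.curve.M2)
      = (\<integral>z. f (dist (fst z) (snd z)) \<partial>circle.curve.M2)"
    if "f \<in> borel_measurable borel" for f :: "real \<Rightarrow> real"
    by (simp add: integral_dist_law[symmetric, OF X.sets_curve_measure that]
        integral_dist_law[symmetric, OF circle.sets_curve_measure that])
  have "X.curve.inertia = 1"
    using same_moments[of "\<lambda>u. u\<^sup>2"] X.curve.integral_pair_dist_sq circle_integral_pair_dist_sq by simp
  moreover have "(\<integral>z. (dist (fst z) (snd z)) ^ 4 \<partial>X.curve.M2) = 6"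
    using same_moments[of "\<lambda>u. u ^ 4"] circle_integral_pair_dist_pow4 by simp
  ultimately have "X.curve.central_moment4 \<le> X.curve.inertia\<^sup>2"
    using X.curve.integral_pair_dist_pow4_ge by simp
  then have "AE x in curve_measure \<gamma> L. x \<in> sphere X.curve.centroid 1"
    using X.curve.AE_dist_centroid_eq_sqrt_inertia \<open>X.curve.inertia = 1\<close>
    by (auto simp: dist_commute elim!: eventually_mono)
  then have "\<gamma> ` {0..L} \<subseteq> sphere X.curve.centroid 1"
    by (intro X.image_subset_if_AE) auto
  then show ?thesis
    using simple_loop_in_sphere_onto[OF continuous_on_subset[OF X.continuous] X.L_pos loop inj]
    by blast
qed

end
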